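(* Let $A_1,\dots,A_n\subseteq\mathbb Z^n$ be finite, $M=(\mathbb C\setminus\{0\})^n$, and let $\mathscr F_i$ be the space of Laurent polynomials $\sum_{\mathbf a\in A_i}f_{\mathbf a}\mathbf z^{\mathbf a}$ with inner product $\langle\sum f_{\mathbf a}\mathbf z^{\mathbf a},\sum g_{\mathbf a}\mathbf z^{\mathbf a}\rangle=\sum_{\mathbf a\in A_i}f_{\mathbf a}\overline{g_{\mathbf a}}$. Let $\lambda_1,\dots,\lambda_n$ be positive integers, $\mathscr G=\mathscr F_1^{\lambda_1}\cdots\mathscr F_n^{\lambda_n}$ and $B=\lambda_1A_1+\cdots+\lambda_nA_n$ (Minkowski sum). For $\mathbf b\in B$ let $c_{\mathbf b}$ be the number of ordered tuples $(\mathbf a_{11},\dots,\mathbf a_{1\lambda_1},\dots,\mathbf a_{n1},\dots,\mathbf a_{n\lambda_n})$ with $\mathbf a_{ij}\in A_i$ and $\sum_{i,j}\mathbf a_{ij}=\mathbf b$. Then $\mathscr G$ is the space of Laurent polynomials $\sum_{\mathbf b\in B}f_{\mathbf b}\mathbf z^{\mathbf b}$ with inner product \[\Big\langle\sum_{\mathbf b\in B}f_{\mathbf b}\mathbf z^{\mathbf b},\sum_{\mathbf b\in B}g_{\mathbf b}\mathbf z^{\mathbf b}\Big\rangle_{\mathscr G}=\sum_{\mathbf b\in B}\frac{f_{\mathbf b}\overline{g_{\mathbf b}}}{c_{\mathbf b}}.\]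
   Context: A fewspace on a complex manifold $M$ is a complex Hilbert space of holomorphic functions $M\to\mathbb C$ on which every evaluation $f\mapsto f(\mathbf x)$ is a continuous, nonzero linear functional. Product of fewspaces: regard the Hilbert tensor product $\mathscr E\otimes\mathscr F$ as functions on $M\times M$ via $(e\otimes f)(\mathbf x_1,\mathbf x_2)=e(\mathbf x_1)f(\mathbf x_2)$, let $\Delta(h)(\mathbf x)=h(\mathbf x,\mathbf x)$; $\mathscr E\mathscr F=\Delta(\mathscr E\otimes\mathscr F)$ with norm $\|g\|=\min\{\|h\|:\Delta(h)=g\}$; $\mathscr F^\lambda$ is the $\lambda$-fold product. *)

theory Defs
  imports "HOL-Analysis.Analysis"
begin

text \<open>A finite-dimensional Hilbert space of complex functions on a domain, given by
  its carrier (a set of functions) and its inner product (linear in the first,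
  conjugate-linear in the second argument).\<close>
type_synonym 'x fsp = "('x \<Rightarrow> complex) set \<times> (('x \<Rightarrow> complex) \<Rightarrow> ('x \<Rightarrow> complex) \<Rightarrow> complex)"

definition is_onb :: "'x fsp \<Rightarrow> ('x \<Rightarrow> complex) set \<Rightarrow> bool" where
  "is_onb E B \<longleftrightarrow> finite B \<and> B \<subseteq> fst E
     \<and> (\<forall>e\<in>B. \<forall>f\<in>B. snd E e f = (if e = f then 1 else 0))
     \<and> fst E = {(\<lambda>x. \<Sum>e\<in>B. c e * e x) | c. True}"

text \<open>The Hilbert tensor product E (x) F is realised via
  orthonormal bases eb, fb of E and F: its elements are the coefficient families
  h on eb \<times> fb (norm = l2 norm of h), representing the function
  (x1,x2) \<mapsto> \<Sum> h(e,f) e(x1) f(x2).  The diagonal restriction is fdelta;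
  the product space is its image with the minimal norm; the inner product is
  recovered from the norm by polarization.\<close>
definition fdelta :: "('x \<Rightarrow> complex) set \<Rightarrow> ('x \<Rightarrow> complex) set
     \<Rightarrow> (('x \<Rightarrow> complex) \<times> ('x \<Rightarrow> complex) \<Rightarrow> complex) \<Rightarrow> ('x \<Rightarrow> complex)" where
  "fdelta eb fb h = (\<lambda>x. \<Sum>p\<in>eb \<times> fb. h p * fst p x * snd p x)"

definition fprod_norm :: "'x fsp \<Rightarrow> 'x fsp \<Rightarrow> ('x \<Rightarrow> complex) \<Rightarrow> real" where
  "fprod_norm E F g =
     (let eb = (SOME B. is_onb E B); fb = (SOME B. is_onb F B) in
      Inf {sqrt (\<Sum>p\<in>eb \<times> fb. (cmod (h p))\<^sup>2) | h. fdelta eb fb h = g})"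

definition fprod :: "'x fsp \<Rightarrow> 'x fsp \<Rightarrow> 'x fsp" where
  "fprod E F =
     (let eb = (SOME B. is_onb E B); fb = (SOME B. is_onb F B);
          N = fprod_norm E F in
      ({fdelta eb fb h | h. True},
       (\<lambda>g k. ((complex_of_real ((N (\<lambda>x. g x + k x))\<^sup>2) - complex_of_real ((N (\<lambda>x. g x - k x))\<^sup>2))
              + \<i> * complex_of_real ((N (\<lambda>x. g x + \<i> * k x))\<^sup>2)
              - \<i> * complex_of_real ((N (\<lambda>x. g x - \<i> * k x))\<^sup>2)) / 4)))"

fun fpow :: "'x fsp \<Rightarrow> nat \<Rightarrow> 'x fsp" where
  "fpow F (Suc 0) = F"
| "fpow F (Suc (Suc k)) = fprod (fpow F (Suc k)) F"

fun fprod_list :: "'x fsp list \<Rightarrow> 'x fsp" where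
  "fprod_list [E] = E"
| "fprod_list (E # F # r) = fprod_list (fprod E F # r)"

text \<open>The torus M = (C \ {0})^n, monomials, and Laurent polynomial spaces.
  Functions are regarded as functions on M, extended by 0 outside M.\<close>
definition torus :: "(complex ^ 'n) set" where
  "torus = {z. \<forall>k. z $ k \<noteq> 0}"

definition monom :: "int ^ 'n \<Rightarrow> complex ^ 'n \<Rightarrow> complex" where
  "monom a z = (\<Prod>k\<in>UNIV. (z $ k) powi (a $ k))"

definition laurent :: "(int ^ 'n) set \<Rightarrow> (int ^ 'n \<Rightarrow> complex) \<Rightarrow> (complex ^ 'n \<Rightarrow> complex)" where
  "laurent A c = (\<lambda>z. if z \<in> torus then (\<Sum>a\<in>A. c a * monom a z) else 0)"

definition lcoeff :: "(int ^ 'n) set \<Rightarrow> (complex ^ 'n \<Rightarrow> complex) \<Rightarrow> int ^ 'n \<Rightarrow> complex" where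
  "lcoeff A f = (SOME c. f = laurent A c)"

definition laurent_space :: "(int ^ 'n) set \<Rightarrow> (int ^ 'n \<Rightarrow> real) \<Rightarrow> (complex ^ 'n) fsp" where
  "laurent_space A w =
     ({laurent A c | c. True},
      (\<lambda>f g. \<Sum>a\<in>A. lcoeff A f a * cnj (lcoeff A g a) / complex_of_real (w a)))"

definition tuples :: "('n \<Rightarrow> (int ^ 'n) set) \<Rightarrow> ('n \<Rightarrow> nat) \<Rightarrow> ('n \<Rightarrow> nat \<Rightarrow> int ^ 'n) set" where
  "tuples A lam = {t. (\<forall>i. \<forall>j<lam i. t i j \<in> A i) \<and> (\<forall>i j. lam i \<le> j \<longrightarrow> t i j = 0)}"

definition tsum :: "('n::finite \<Rightarrow> nat) \<Rightarrow> ('n \<Rightarrow> nat \<Rightarrow> int ^ 'n) \<Rightarrow> int ^ 'n" where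
  "tsum lam t = (\<Sum>i\<in>UNIV. \<Sum>j<lam i. t i j)"

definition minksum :: "('n::finite \<Rightarrow> (int ^ 'n) set) \<Rightarrow> ('n \<Rightarrow> nat) \<Rightarrow> (int ^ 'n) set" where
  "minksum A lam = tsum lam ` tuples A lam"

definition tcount :: "('n::finite \<Rightarrow> (int ^ 'n) set) \<Rightarrow> ('n \<Rightarrow> nat) \<Rightarrow> int ^ 'n \<Rightarrow> nat" where
  "tcount A lam b = card {t \<in> tuples A lam. tsum lam t = b}"

end

theory Submission
  imports Defs
begin

(*
  A weighted Laurent space L(S, w) consists of the Laurent polynomials with support in
  the finite set S, with inner product  <f, g> = sum_a f_a conj(g_a) / w a.  The proof
  rests on the product formula (fprod_laurent_space)

      L(S, w) L(T, v) = L(S + T, w * v),   (w * v)(b) = sum_{s + t = b} w s * v t.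

  Since the monomials are linearly independent on the torus, coefficients are well
  defined and every orthonormal basis of L(S, w) satisfies explicit orthonormality and
  completeness relations for its coefficient vectors.  Writing a tensor h in monomials,
  its diagonal has at b the sum of its coefficients over the fibre s + t = b; Parseval
  and the weighted Cauchy-Schwarz inequality on each fibre show that the minimal norm
  of a preimage of sum_b G_b z^b is sum_b |G_b|^2 / (w * v)(b), attained by spreading G_b
  over the fibre proportionally to the weights.  Polarization transfers this to the
  inner products.

  The formula is then iterated in the language of counting models: a Laurent space on
  sigma ` X weighted by the fibre sizes of sigma.  Such models are closed under products
  (index set X1 x X2 with the sum map), so F_i^lambda_i is modelled by the lambda_i-tuples
  from A_i, and the whole product G by all exponent tuples with their sums, whose fibre
  sizes are the numbers c_b of the theorem.
*)

lemma sum_by_fibres: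
  assumes "finite X"
  shows "(\<Sum>q\<in>X. g q) = (\<Sum>b\<in>\<sigma> ` X. \<Sum>q\<in>X. if \<sigma> q = b then g q else 0)"
  using sum.image_gen[OF assms, of g \<sigma>] assms by (simp add: sum.inter_filter)

lemma sum_product_set:
  fixes f :: "'a \<Rightarrow> 'c::semiring_0"
  shows "(\<Sum>q\<in>S \<times> T. f (fst q) * g (snd q)) = (\<Sum>a\<in>S. f a) * (\<Sum>b\<in>T. g b)"
  by (simp add: sum_product sum.cartesian_product case_prod_beta)

text \<open>Weighted Cauchy--Schwarz: \<open>|\<Sum>x\<^sub>i|\<^sup>2 \<le> (\<Sum>u\<^sub>i) (\<Sum>|x\<^sub>i|\<^sup>2/u\<^sub>i)\<close> for positive \<open>u\<^sub>i\<close>;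
  it is the reason the minimal-norm preimage spreads a coefficient proportionally.\<close>
lemma weighted_Cauchy_Schwarz:
  fixes x :: "'a \<Rightarrow> complex"
  assumes fin: "finite I" and u: "\<And>i. i \<in> I \<Longrightarrow> u i > 0"
  shows "(cmod (\<Sum>i\<in>I. x i))\<^sup>2 \<le> (\<Sum>i\<in>I. u i) * (\<Sum>i\<in>I. (cmod (x i))\<^sup>2 / u i)"
proof -
  have "cmod (\<Sum>i\<in>I. x i) \<le> (\<Sum>i\<in>I. cmod (x i))" by (rule norm_sum)
  then have "(cmod (\<Sum>i\<in>I. x i))\<^sup>2 \<le> (\<Sum>i\<in>I. cmod (x i))\<^sup>2"
    by (intro power_mono) auto
  also have "(\<Sum>i\<in>I. cmod (x i)) = (\<Sum>i\<in>I. sqrt (u i) * (cmod (x i) / sqrt (u i)))"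
    using u by (intro sum.cong refl) (simp add: less_imp_le, metis less_irrefl)
  also have "(\<dots>)\<^sup>2 \<le> (\<Sum>i\<in>I. (sqrt (u i))\<^sup>2) * (\<Sum>i\<in>I. (cmod (x i) / sqrt (u i))\<^sup>2)"
    by (rule Cauchy_Schwarz_ineq_sum)
  also have "\<dots> = (\<Sum>i\<in>I. u i) * (\<Sum>i\<in>I. (cmod (x i))\<^sup>2 / u i)"
    using u by (intro arg_cong2[where f="(*)"] sum.cong refl) (simp_all add: less_imp_le power_divide)
  finally show ?thesis .
qed

lemma polarization:
  fixes a b :: complex
  shows "(complex_of_real ((cmod (a + b))\<^sup>2) - complex_of_real ((cmod (a - b))\<^sup>2)
     + \<i> * complex_of_real ((cmod (a + \<i> * b))\<^sup>2) - \<i> * complex_of_real ((cmod (a - \<i> * b))\<^sup>2)) / 4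
    = a * cnj b"
  unfolding complex_norm_square by (simp add: algebra_simps)


section \<open>Monomials and Laurent polynomials on the torus\<close>

lemma monom_mult: "monom a (\<chi> k. u $ k * z $ k) = monom a u * monom a z"
  by (simp add: monom_def power_int_mult_distrib prod.distrib)

lemma monom_add: "z \<in> torus \<Longrightarrow> monom (a + b) z = monom a z * monom b z"
  by (simp add: monom_def torus_def power_int_add prod.distrib)

lemma monom_nonzero: "z \<in> torus \<Longrightarrow> monom a z \<noteq> 0"
  by (simp add: monom_def torus_def)

lemma torus_mult: "u \<in> torus \<Longrightarrow> z \<in> torus \<Longrightarrow> (\<chi> k. u $ k * z $ k) \<in> torus"
  by (simp add: torus_def)

text \<open>Distinct exponents give distinct characters of the torus: evaluate at the
  point that is 2 in a coordinate where the exponents differ and 1 elsewhere.\<close>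
lemma monom_separates:
  fixes a b :: "int ^ 'n"
  assumes "a \<noteq> b"
  shows "\<exists>u\<in>torus. monom a u \<noteq> monom b u"
proof -
  obtain k where k: "a $ k \<noteq> b $ k" using assms by (metis vec_eq_iff)
  define u :: "complex ^ 'n" where "u = (\<chi> j. if j = k then 2 else 1)"
  have u_torus: "u \<in> torus" by (simp add: torus_def u_def)
  have monom_u: "monom c u = of_real (2 powi (c $ k))" for c :: "int ^ 'n"
  proof -
    have "monom c u = (\<Prod>j\<in>UNIV. if j = k then 2 powi (c $ k) else 1)"
      unfolding monom_def u_def by (intro prod.cong) auto
    then show ?thesis by (simp add: prod.delta of_real_power_int)
  qed
  have "(2::real) powi (a $ k) \<noteq> 2 powi (b $ k)"
    using k power_int_strict_increasing[of "a $ k" "b $ k" "2::real"]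
      power_int_strict_increasing[of "b $ k" "a $ k" "2::real"]
    by (cases "a $ k < b $ k") auto
  then have "monom a u \<noteq> monom b u" by (simp only: monom_u of_real_eq_iff not_False_eq_True)
  then show ?thesis using u_torus by blast
qed

text \<open>Linear independence of the monomials, by induction on the support: multiplying
  the variable by a torus point \<open>u\<close> separating two exponents eliminates one term.\<close>
lemma monom_independent:
  fixes S :: "(int ^ 'n) set"
  assumes "finite S" and "\<forall>z\<in>torus. (\<Sum>a\<in>S. c a * monom a z) = 0"
  shows "\<forall>a\<in>S. c a = 0"
  using assms
proof (induction S arbitrary: c rule: finite_induct)
  case empty
  then show ?case by simp
next
  case (insert a0 S c)
  have rel: "(\<Sum>a\<in>S. c a * monom a z) = - c a0 * monom a0 z" if "z \<in> torus" for z
    using insert.prems insert.hyps that by (simp add: add_eq_0_iff)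
  have coeffs_S: "c a = 0" if aS: "a \<in> S" for a
  proof -
    have "a \<noteq> a0" using aS insert.hyps by auto
    then obtain u where u: "u \<in> torus" "monom a u \<noteq> monom a0 u" using monom_separates by blast
    have "\<forall>z\<in>torus. (\<Sum>b\<in>S. (c b * (monom b u - monom a0 u)) * monom b z) = 0"
    proof
      fix z :: "complex ^ 'n" assume z: "z \<in> torus"
      have uz: "(\<chi> k. u $ k * z $ k) \<in> torus" using u z torus_mult by blast
      have "(\<Sum>b\<in>S. (c b * (monom b u - monom a0 u)) * monom b z)
          = (\<Sum>b\<in>S. c b * monom b (\<chi> k. u $ k * z $ k)) - monom a0 u * (\<Sum>b\<in>S. c b * monom b z)"
        by (simp add: monom_mult algebra_simps sum_subtractf sum_distrib_left)
      also have "\<dots> = 0" using rel[OF uz] rel[OF z] by (simp add: monom_mult)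
      finally show "(\<Sum>b\<in>S. (c b * (monom b u - monom a0 u)) * monom b z) = 0" .
    qed
    from insert.IH[OF this] aS have "c a * (monom a u - monom a0 u) = 0" by blast
    then show ?thesis using u by simp
  qed
  have one_torus: "(\<chi> k. 1) \<in> (torus :: (complex ^ 'n) set)" by (simp add: torus_def)
  have "c a0 * monom a0 (\<chi> k. 1) = 0" using rel[OF one_torus] coeffs_S by simp
  then have "c a0 = 0" using monom_nonzero[OF one_torus] by simp
  then show ?case using coeffs_S by auto
qed

lemma laurent_coeff_unique:
  fixes S :: "(int ^ 'n) set"
  assumes "finite S" "laurent S c = laurent S d" "a \<in> S"
  shows "c a = d a"
proof -
  have "\<forall>z\<in>torus. (\<Sum>a\<in>S. (c a - d a) * monom a z) = 0"
  proof
    fix z :: "complex ^ 'n" assume z: "z \<in> torus"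
    have "laurent S c z = laurent S d z" using assms(2) by simp
    then show "(\<Sum>a\<in>S. (c a - d a) * monom a z) = 0"
      using z by (simp add: laurent_def algebra_simps sum_subtractf)
  qed
  from monom_independent[OF assms(1) this] assms(3) show ?thesis by simp
qed

lemma lcoeff_laurent: "finite S \<Longrightarrow> a \<in> S \<Longrightarrow> lcoeff S (laurent S c) a = c a"
  unfolding lcoeff_def
  by (rule laurent_coeff_unique[symmetric], assumption, rule someI[of _ c], auto)

lemma laurent_cong: "(\<And>a. a \<in> S \<Longrightarrow> c a = d a) \<Longrightarrow> laurent S c = laurent S d"
  unfolding laurent_def by (intro ext) (auto intro!: sum.cong)

lemma laurent_lincomb:
  "(\<Sum>e\<in>B. k e * laurent S (d e) x) = laurent S (\<lambda>a. \<Sum>e\<in>B. k e * d e a) x"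
  unfolding laurent_def
  by (auto simp: sum_distrib_left sum_distrib_right mult.assoc intro: sum.swap)

lemma laurent_add: "laurent S c x + laurent S d x = laurent S (\<lambda>a. c a + d a) x"
  unfolding laurent_def by (simp add: algebra_simps sum.distrib)

lemma laurent_diff: "laurent S c x - laurent S d x = laurent S (\<lambda>a. c a - d a) x"
  unfolding laurent_def by (simp add: algebra_simps sum_subtractf)

lemma laurent_smult: "k * laurent S c x = laurent S (\<lambda>a. k * c a) x"
  unfolding laurent_def by (simp add: sum_distrib_left mult.assoc)

lemma laurent_space_carrier: "fst (laurent_space S w) = {laurent S c | c. True}"
  by (simp add: laurent_space_def)

lemma laurent_space_inner:
  "snd (laurent_space S w) f g = (\<Sum>a\<in>S. lcoeff S f a * cnj (lcoeff S g a) / complex_of_real (w a))"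
  by (simp add: laurent_space_def)

lemma laurent_space_weights_cong:
  "(\<And>a. a \<in> S \<Longrightarrow> w a = w' a) \<Longrightarrow> laurent_space S w = laurent_space S w'"
  unfolding laurent_space_def by (auto intro!: ext sum.cong)

section \<open>Orthonormal bases of weighted Laurent spaces\<close>

locale weighted_laurent =
  fixes S :: "(int ^ 'n::finite) set" and w :: "int ^ 'n \<Rightarrow> real"
  assumes finite_support: "finite S"
    and weight_pos: "\<And>a. a \<in> S \<Longrightarrow> w a > 0"
begin

text \<open>The monomials scaled by \<open>sqrt (w a)\<close> form an orthonormal basis; in particular
  the bases chosen in the definition of \<open>fprod\<close> exist.\<close>
definition unit_monom :: "int ^ 'n \<Rightarrow> complex ^ 'n \<Rightarrow> complex" where
  "unit_monom a = laurent S (\<lambda>x. if x = a then complex_of_real (sqrt (w a)) else 0)"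

lemma lcoeff_unit_monom:
  "x \<in> S \<Longrightarrow> lcoeff S (unit_monom a) x = (if x = a then complex_of_real (sqrt (w a)) else 0)"
  by (simp add: unit_monom_def lcoeff_laurent finite_support)

lemma unit_monom_inj: "inj_on unit_monom S"
proof (rule inj_onI)
  fix a b assume ab: "a \<in> S" "b \<in> S" "unit_monom a = unit_monom b"
  have "lcoeff S (unit_monom a) a \<noteq> 0"
    using weight_pos[OF ab(1)] ab(1) by (simp add: lcoeff_unit_monom)
  then have "lcoeff S (unit_monom b) a \<noteq> 0" using ab(3) by simp
  then show "a = b" using ab(1) by (simp add: lcoeff_unit_monom split: if_splits)
qed

lemma unit_monom_inner:
  assumes "a \<in> S" "b \<in> S"
  shows "snd (laurent_space S w) (unit_monom a) (unit_monom b) = (if a = b then 1 else 0)"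
proof -
  have "snd (laurent_space S w) (unit_monom a) (unit_monom b)
      = (\<Sum>x\<in>S. if x = a then (if a = b then 1 else 0) else 0)"
    unfolding laurent_space_inner using weight_pos[OF assms(1)]
    by (intro sum.cong refl) (auto simp: lcoeff_unit_monom simp flip: of_real_mult)
  then show ?thesis using assms(1) finite_support by simp
qed

lemma unit_monom_combination:
  "(\<lambda>x. \<Sum>e\<in>unit_monom ` S. k e * e x) = laurent S (\<lambda>y. k (unit_monom y) * sqrt (w y))"
proof -
  have "(\<lambda>x. \<Sum>e\<in>unit_monom ` S. k e * e x) = (\<lambda>x. \<Sum>a\<in>S. k (unit_monom a) * unit_monom a x)"
    by (intro ext sum.reindex[OF unit_monom_inj, unfolded comp_def])
  also have "\<dots> = laurent S (\<lambda>y. \<Sum>a\<in>S. k (unit_monom a) * (if y = a then complex_of_real (sqrt (w a)) else 0))"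
    unfolding unit_monom_def by (intro ext laurent_lincomb)
  also have "\<dots> = laurent S (\<lambda>y. k (unit_monom y) * sqrt (w y))"
    using finite_support by (intro laurent_cong) (simp add: if_distrib sum.delta cong: if_cong)
  finally show ?thesis .
qed

lemma is_onb_unit_monoms: "is_onb (laurent_space S w) (unit_monom ` S)"
  unfolding is_onb_def
proof (intro conjI ballI)
  show "finite (unit_monom ` S)" using finite_support by simp
  show "unit_monom ` S \<subseteq> fst (laurent_space S w)"
    by (auto simp: laurent_space_carrier unit_monom_def)
  show "snd (laurent_space S w) e f = (if e = f then 1 else 0)"
    if "e \<in> unit_monom ` S" "f \<in> unit_monom ` S" for e f
    using that unit_monom_inner unit_monom_inj by (auto simp: inj_on_eq_iff)
  show "fst (laurent_space S w) = {\<lambda>x. \<Sum>e\<in>unit_monom ` S. k e * e x | k. True}"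
  proof (intro equalityI subsetI)
    fix f assume "f \<in> fst (laurent_space S w)"
    then obtain c where f: "f = laurent S c" by (auto simp: laurent_space_carrier)
    define k where "k e = c (inv_into S unit_monom e) / sqrt (w (inv_into S unit_monom e))" for e
    have "f = laurent S (\<lambda>y. k (unit_monom y) * sqrt (w y))"
      unfolding f using unit_monom_inj by (intro laurent_cong) (auto simp: k_def dest!: weight_pos)
    then show "f \<in> {\<lambda>x. \<Sum>e\<in>unit_monom ` S. k e * e x | k. True}"
      by (auto simp: unit_monom_combination)
  qed (auto simp: unit_monom_combination laurent_space_carrier)
qed

abbreviation chosen_onb :: "(complex ^ 'n \<Rightarrow> complex) set" where
  "chosen_onb \<equiv> SOME B. is_onb (laurent_space S w) B"

lemma chosen_onb_is_onb: "is_onb (laurent_space S w) chosen_onb"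
  by (rule someI, rule is_onb_unit_monoms)

end

locale laurent_onb = weighted_laurent S w for S :: "(int ^ 'n::finite) set" and w +
  fixes eb :: "(complex ^ 'n \<Rightarrow> complex) set"
  assumes onb: "is_onb (laurent_space S w) eb"
begin

lemma basis_finite: "finite eb"
  using onb by (simp add: is_onb_def)

lemma basis_laurent: "e \<in> eb \<Longrightarrow> e = laurent S (lcoeff S e)"
proof -
  assume "e \<in> eb"
  then have "e \<in> fst (laurent_space S w)" using onb by (auto simp: is_onb_def)
  then obtain c where c: "e = laurent S c" by (auto simp: laurent_space_carrier)
  show ?thesis unfolding c by (rule laurent_cong) (simp add: lcoeff_laurent finite_support)
qed

lemma basis_orthonormal:
  "e \<in> eb \<Longrightarrow> e' \<in> eb \<Longrightarrow>
   (\<Sum>a\<in>S. lcoeff S e a * cnj (lcoeff S e' a) / complex_of_real (w a)) = (if e = e' then 1 else 0)"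
  using onb by (simp add: is_onb_def laurent_space_inner)

lemma basis_eval:
  "e \<in> eb \<Longrightarrow> e z = (if z \<in> torus then \<Sum>a\<in>S. lcoeff S e a * monom a z else 0)"
  by (subst basis_laurent) (auto simp: laurent_def)

lemma expansion_lcoeff:
  assumes exp: "laurent S d = (\<lambda>z. \<Sum>e\<in>eb. k e * e z)" and y: "y \<in> S"
  shows "d y = (\<Sum>e\<in>eb. k e * lcoeff S e y)"
proof -
  have "laurent S d = (\<lambda>z. \<Sum>e\<in>eb. k e * laurent S (lcoeff S e) z)"
    unfolding exp by (intro ext sum.cong refl) (metis basis_laurent)
  also have "\<dots> = laurent S (\<lambda>y. \<Sum>e\<in>eb. k e * lcoeff S e y)"
    by (intro ext laurent_lincomb)
  finally show ?thesis using laurent_coeff_unique[OF finite_support _ y] by blast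
qed

lemma expansion_coeff:
  assumes exp: "laurent S d = (\<lambda>z. \<Sum>e\<in>eb. k e * e z)" and e': "e' \<in> eb"
  shows "k e' = (\<Sum>y\<in>S. d y * cnj (lcoeff S e' y) / complex_of_real (w y))"
proof -
  have "(\<Sum>y\<in>S. d y * cnj (lcoeff S e' y) / complex_of_real (w y))
      = (\<Sum>e\<in>eb. k e * (\<Sum>y\<in>S. lcoeff S e y * cnj (lcoeff S e' y) / complex_of_real (w y)))"
    by (simp add: expansion_lcoeff[OF exp] sum_distrib_left sum_distrib_right sum_divide_distrib
        mult.assoc sum.swap[of _ S])
  also have "\<dots> = (\<Sum>e\<in>eb. if e = e' then k e else 0)"
    using e' by (intro sum.cong refl) (simp add: basis_orthonormal)
  also have "\<dots> = k e'" using e' basis_finite by simp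
  finally show ?thesis by simp
qed

text \<open>Completeness: expanding the monomial \<open>z\<^sup>a\<close> in the basis shows that the families
  \<open>(lcoeff S e a)\<^sub>e\<^sub>\<in>\<^sub>e\<^sub>b\<close> for different \<open>a\<close> are orthogonal, with squared length \<open>w a\<close>.\<close>
lemma basis_complete:
  assumes a: "a \<in> S" and x: "x \<in> S"
  shows "(\<Sum>e\<in>eb. cnj (lcoeff S e a) * lcoeff S e x) = (if a = x then complex_of_real (w a) else 0)"
proof -
  let ?\<delta> = "\<lambda>y. if y = a then 1 else 0 :: complex"
  have "laurent S ?\<delta> \<in> fst (laurent_space S w)" by (auto simp: laurent_space_carrier)
  then obtain k where exp: "laurent S ?\<delta> = (\<lambda>z. \<Sum>e\<in>eb. k e * e z)"
    using onb unfolding is_onb_def by auto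
  have k: "k e = cnj (lcoeff S e a) / complex_of_real (w a)" if "e \<in> eb" for e
  proof -
    have "k e = (\<Sum>y\<in>S. ?\<delta> y * cnj (lcoeff S e y) / complex_of_real (w y))"
      by (rule expansion_coeff[OF exp that])
    also have "\<dots> = (\<Sum>y\<in>S. if y = a then cnj (lcoeff S e y) / complex_of_real (w y) else 0)"
      by (intro sum.cong) auto
    finally show ?thesis using a finite_support by simp
  qed
  have "?\<delta> x = (\<Sum>e\<in>eb. k e * lcoeff S e x)"
    by (rule expansion_lcoeff[OF exp x])
  also have "\<dots> = (\<Sum>e\<in>eb. cnj (lcoeff S e a) * lcoeff S e x) / complex_of_real (w a)"
    by (simp add: k sum_divide_distrib)
  finally show ?thesis using weight_pos[OF a] by (auto simp: field_simps)
qed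

end

section \<open>Tensors of two weighted Laurent spaces\<close>

definition sumset :: "(int ^ 'n::finite) set \<Rightarrow> (int ^ 'n) set \<Rightarrow> (int ^ 'n) set" where
  "sumset S T = (\<lambda>q. fst q + snd q) ` (S \<times> T)"

definition conv_weight ::
  "(int ^ 'n::finite) set \<Rightarrow> (int ^ 'n) set \<Rightarrow> (int ^ 'n \<Rightarrow> real) \<Rightarrow> (int ^ 'n \<Rightarrow> real) \<Rightarrow> int ^ 'n \<Rightarrow> real"
where
  "conv_weight S T w v b = (\<Sum>q\<in>S \<times> T. if fst q + snd q = b then w (fst q) * v (snd q) else 0)"

text \<open>An element \<open>h\<close> of
  the tensor product is a coefficient family on \<open>eb \<times> fb\<close>; expanding the basis vectors
  in monomials turns it into the family \<open>tensor_coeff h\<close> on \<open>S \<times> T\<close>.\<close>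
locale laurent_onb_pair =
  E: laurent_onb S w eb + F: laurent_onb T v fb
  for S :: "(int ^ 'n::finite) set" and w eb and T :: "(int ^ 'n) set" and v fb
begin

definition prod_coeff :: "(complex ^ 'n \<Rightarrow> complex) \<times> (complex ^ 'n \<Rightarrow> complex) \<Rightarrow> (int ^ 'n) \<times> (int ^ 'n) \<Rightarrow> complex"
  where "prod_coeff p q = lcoeff S (fst p) (fst q) * lcoeff T (snd p) (snd q)"

definition tensor_coeff ::
  "((complex ^ 'n \<Rightarrow> complex) \<times> (complex ^ 'n \<Rightarrow> complex) \<Rightarrow> complex) \<Rightarrow> (int ^ 'n) \<times> (int ^ 'n) \<Rightarrow> complex"
  where "tensor_coeff h q = (\<Sum>p\<in>eb \<times> fb. h p * prod_coeff p q)"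

lemma finite_pairs: "finite (S \<times> T)"
  using E.finite_support F.finite_support by simp

lemma finite_sumset: "finite (sumset S T)"
  using finite_pairs by (simp add: sumset_def)

lemma finite_bases: "finite (eb \<times> fb)"
  using E.basis_finite F.basis_finite by simp

lemma pair_weight_pos: "q \<in> S \<times> T \<Longrightarrow> w (fst q) * v (snd q) > 0"
  using E.weight_pos F.weight_pos by (auto simp: mem_Times_iff)

lemma conv_weight_pos: "b \<in> sumset S T \<Longrightarrow> conv_weight S T w v b > 0"
proof -
  assume "b \<in> sumset S T"
  then obtain q where q: "q \<in> S \<times> T" "fst q + snd q = b" by (auto simp: sumset_def)
  show ?thesis unfolding conv_weight_def
    using q finite_pairs pair_weight_pos
    by (intro sum_pos2[of _ q]) (auto intro!: mult_nonneg_nonneg less_imp_le simp: mem_Times_iff)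
qed

lemma fdelta_tensor:
  "fdelta eb fb h = laurent (sumset S T)
     (\<lambda>b. \<Sum>q\<in>S \<times> T. if fst q + snd q = b then tensor_coeff h q else 0)"
proof
  fix z :: "complex ^ 'n"
  show "fdelta eb fb h z = laurent (sumset S T)
     (\<lambda>b. \<Sum>q\<in>S \<times> T. if fst q + snd q = b then tensor_coeff h q else 0) z"
  proof (cases "z \<in> torus")
    case False
    then show ?thesis
      by (auto simp: laurent_def fdelta_def E.basis_eval F.basis_eval intro!: sum.neutral)
  next
    case True
    have "fdelta eb fb h z = (\<Sum>p\<in>eb \<times> fb. h p * (\<Sum>q\<in>S \<times> T. prod_coeff p q * monom (fst q + snd q) z))"
      unfolding fdelta_def
    proof (intro sum.cong refl)
      fix p assume "p \<in> eb \<times> fb"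
      then have "fst p z * snd p z
          = (\<Sum>q\<in>S \<times> T. (lcoeff S (fst p) (fst q) * monom (fst q) z) * (lcoeff T (snd p) (snd q) * monom (snd q) z))"
        using True by (auto simp: E.basis_eval F.basis_eval intro: sum_product_set[symmetric])
      also have "\<dots> = (\<Sum>q\<in>S \<times> T. prod_coeff p q * monom (fst q + snd q) z)"
        by (intro sum.cong refl) (simp add: prod_coeff_def monom_add[OF True] mult_ac)
      finally show "h p * fst p z * snd p z = h p * (\<Sum>q\<in>S \<times> T. prod_coeff p q * monom (fst q + snd q) z)"
        by (simp add: mult.assoc)
    qed
    also have "\<dots> = (\<Sum>p\<in>eb \<times> fb. \<Sum>q\<in>S \<times> T. h p * prod_coeff p q * monom (fst q + snd q) z)"
      by (simp add: sum_distrib_left mult.assoc)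
    also have "\<dots> = (\<Sum>q\<in>S \<times> T. tensor_coeff h q * monom (fst q + snd q) z)"
      by (subst sum.swap) (simp add: tensor_coeff_def sum_distrib_right)
    also have "\<dots> = (\<Sum>b\<in>sumset S T. \<Sum>q\<in>S \<times> T.
        if fst q + snd q = b then tensor_coeff h q * monom (fst q + snd q) z else 0)"
      unfolding sumset_def by (rule sum_by_fibres[OF finite_pairs])
    also have "\<dots> = (\<Sum>b\<in>sumset S T. (\<Sum>q\<in>S \<times> T. if fst q + snd q = b then tensor_coeff h q else 0) * monom b z)"
      by (intro sum.cong refl) (auto simp: sum_distrib_right intro!: sum.cong)
    finally show ?thesis using True by (simp add: laurent_def)
  qed
qed

lemma prod_coeff_orthonormal:
  assumes "p \<in> eb \<times> fb" "p' \<in> eb \<times> fb"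
  shows "(\<Sum>q\<in>S \<times> T. prod_coeff p q * cnj (prod_coeff p' q) / complex_of_real (w (fst q) * v (snd q)))
    = (if p = p' then 1 else 0)"
proof -
  have "(\<Sum>q\<in>S \<times> T. prod_coeff p q * cnj (prod_coeff p' q) / complex_of_real (w (fst q) * v (snd q)))
      = (\<Sum>a\<in>S. lcoeff S (fst p) a * cnj (lcoeff S (fst p') a) / complex_of_real (w a))
      * (\<Sum>b\<in>T. lcoeff T (snd p) b * cnj (lcoeff T (snd p') b) / complex_of_real (v b))"
    unfolding sum_product_set[symmetric] by (intro sum.cong refl) (simp add: prod_coeff_def)
  also have "\<dots> = (if p = p' then 1 else 0)"
    using assms by (auto simp: E.basis_orthonormal F.basis_orthonormal prod_eq_iff)
  finally show ?thesis .
qed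

lemma prod_coeff_complete:
  assumes "q \<in> S \<times> T" "x \<in> S \<times> T"
  shows "(\<Sum>p\<in>eb \<times> fb. cnj (prod_coeff p q) * prod_coeff p x)
    = (if q = x then complex_of_real (w (fst q) * v (snd q)) else 0)"
proof -
  have "(\<Sum>p\<in>eb \<times> fb. cnj (prod_coeff p q) * prod_coeff p x)
      = (\<Sum>e\<in>eb. cnj (lcoeff S e (fst q)) * lcoeff S e (fst x))
      * (\<Sum>f\<in>fb. cnj (lcoeff T f (snd q)) * lcoeff T f (snd x))"
    unfolding sum_product_set[symmetric] by (intro sum.cong refl) (simp add: prod_coeff_def)
  also have "\<dots> = (if q = x then complex_of_real (w (fst q) * v (snd q)) else 0)"
    using assms by (auto simp: E.basis_complete F.basis_complete prod_eq_iff mem_Times_iff)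
  finally show ?thesis .
qed

lemma tensor_coeff_isometry:
  "(\<Sum>q\<in>S \<times> T. (cmod (tensor_coeff h q))\<^sup>2 / (w (fst q) * v (snd q))) = (\<Sum>p\<in>eb \<times> fb. (cmod (h p))\<^sup>2)"
proof -
  have "complex_of_real (\<Sum>q\<in>S \<times> T. (cmod (tensor_coeff h q))\<^sup>2 / (w (fst q) * v (snd q)))
      = (\<Sum>q\<in>S \<times> T. tensor_coeff h q * cnj (tensor_coeff h q) / complex_of_real (w (fst q) * v (snd q)))"
    unfolding of_real_sum of_real_divide complex_norm_square ..
  also have "\<dots> = (\<Sum>q\<in>S \<times> T. \<Sum>p\<in>eb \<times> fb. \<Sum>p'\<in>eb \<times> fb. h p * cnj (h p') *
      (prod_coeff p q * cnj (prod_coeff p' q) / complex_of_real (w (fst q) * v (snd q))))"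
    unfolding tensor_coeff_def cnj_sum sum_product sum_divide_distrib
    by (intro sum.cong refl) (simp add: field_simps)
  also have "\<dots> = (\<Sum>p\<in>eb \<times> fb. \<Sum>p'\<in>eb \<times> fb. h p * cnj (h p') *
      (\<Sum>q\<in>S \<times> T. prod_coeff p q * cnj (prod_coeff p' q) / complex_of_real (w (fst q) * v (snd q))))"
    unfolding sum_distrib_left by (subst sum.swap) (intro sum.cong refl sum.swap)
  also have "\<dots> = (\<Sum>p\<in>eb \<times> fb. \<Sum>p'\<in>eb \<times> fb. if p = p' then h p * cnj (h p) else 0)"
    by (intro sum.cong refl) (simp add: prod_coeff_orthonormal del: of_real_mult)
  also have "\<dots> = complex_of_real (\<Sum>p\<in>eb \<times> fb. (cmod (h p))\<^sup>2)"
    using finite_bases unfolding of_real_sum complex_norm_square by simp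
  finally show ?thesis by (simp only: of_real_eq_iff)
qed

lemma sum_over_fibre:
  "(\<Sum>q\<in>S \<times> T. if fst q + snd q = b then g q else 0) = (\<Sum>q\<in>{q \<in> S \<times> T. fst q + snd q = b}. g q)"
  using finite_pairs by (simp add: sum.inter_filter)

text \<open>Lower bound: by weighted Cauchy--Schwarz on each fibre \<open>s + t = b\<close>, every tensor whose
  diagonal is \<open>\<Sum> G\<^sub>b z\<^sup>b\<close> has squared norm at least \<open>\<Sum> |G\<^sub>b|\<^sup>2 / (w * v)(b)\<close>.\<close>
lemma tensor_norm_lower_bound:
  assumes diag: "fdelta eb fb h = laurent (sumset S T) G"
  shows "(\<Sum>b\<in>sumset S T. (cmod (G b))\<^sup>2 / conv_weight S T w v b) \<le> (\<Sum>p\<in>eb \<times> fb. (cmod (h p))\<^sup>2)"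
proof -
  let ?K = "tensor_coeff h" and ?u = "\<lambda>q. w (fst q) * v (snd q)"
  let ?I = "\<lambda>b. {q \<in> S \<times> T. fst q + snd q = b}"
  have fibre_bound: "(cmod (G b))\<^sup>2 / conv_weight S T w v b \<le> (\<Sum>q\<in>?I b. (cmod (?K q))\<^sup>2 / ?u q)"
    if b: "b \<in> sumset S T" for b
  proof -
    have "G b = (\<Sum>q\<in>?I b. ?K q)"
      using laurent_coeff_unique[OF finite_sumset trans[OF diag[symmetric] fdelta_tensor] b]
      by (simp add: sum_over_fibre)
    moreover have "conv_weight S T w v b = (\<Sum>q\<in>?I b. ?u q)"
      unfolding conv_weight_def sum_over_fibre ..
    moreover have "(cmod (\<Sum>q\<in>?I b. ?K q))\<^sup>2 \<le> (\<Sum>q\<in>?I b. ?u q) * (\<Sum>q\<in>?I b. (cmod (?K q))\<^sup>2 / ?u q)"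
      using finite_pairs pair_weight_pos by (intro weighted_Cauchy_Schwarz) auto
    ultimately show ?thesis using conv_weight_pos[OF b]
      by (simp add: divide_le_eq mult.commute)
  qed
  have "(\<Sum>b\<in>sumset S T. (cmod (G b))\<^sup>2 / conv_weight S T w v b)
      \<le> (\<Sum>b\<in>sumset S T. \<Sum>q\<in>S \<times> T. if fst q + snd q = b then (cmod (?K q))\<^sup>2 / ?u q else 0)"
    unfolding sum_over_fibre by (intro sum_mono fibre_bound)
  also have "\<dots> = (\<Sum>q\<in>S \<times> T. (cmod (?K q))\<^sup>2 / ?u q)"
    unfolding sumset_def by (rule sum_by_fibres[symmetric, OF finite_pairs])
  also have "\<dots> = (\<Sum>p\<in>eb \<times> fb. (cmod (h p))\<^sup>2)" by (rule tensor_coeff_isometry)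
  finally show ?thesis .
qed

text \<open>The bound is attained: distribute \<open>G\<^sub>b\<close> over its fibre proportionally to the weights
  (the equality case of Cauchy--Schwarz) and pull this family back to a tensor.\<close>
definition proportional_coeff :: "(int ^ 'n \<Rightarrow> complex) \<Rightarrow> (int ^ 'n) \<times> (int ^ 'n) \<Rightarrow> complex" where
  "proportional_coeff G q = G (fst q + snd q)
     * complex_of_real (w (fst q) * v (snd q) / conv_weight S T w v (fst q + snd q))"

definition optimal_tensor ::
  "(int ^ 'n \<Rightarrow> complex) \<Rightarrow> (complex ^ 'n \<Rightarrow> complex) \<times> (complex ^ 'n \<Rightarrow> complex) \<Rightarrow> complex" where
  "optimal_tensor G p = (\<Sum>q\<in>S \<times> T. proportional_coeff G q * cnj (prod_coeff p q)
     / complex_of_real (w (fst q) * v (snd q)))"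

lemma tensor_coeff_optimal:
  assumes x: "x \<in> S \<times> T"
  shows "tensor_coeff (optimal_tensor G) x = proportional_coeff G x"
proof -
  define c where "c q = proportional_coeff G q / complex_of_real (w (fst q) * v (snd q))" for q
  have "tensor_coeff (optimal_tensor G) x = (\<Sum>p\<in>eb \<times> fb. \<Sum>q\<in>S \<times> T. c q * (cnj (prod_coeff p q) * prod_coeff p x))"
    unfolding tensor_coeff_def optimal_tensor_def sum_distrib_right
    by (intro sum.cong refl) (simp add: c_def field_simps)
  also have "\<dots> = (\<Sum>q\<in>S \<times> T. c q * (\<Sum>p\<in>eb \<times> fb. cnj (prod_coeff p q) * prod_coeff p x))"
    unfolding sum_distrib_left by (rule sum.swap)
  also have "\<dots> = (\<Sum>q\<in>S \<times> T. if q = x then c x * complex_of_real (w (fst x) * v (snd x)) else 0)"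
    using x by (intro sum.cong refl) (simp add: prod_coeff_complete)
  also have "\<dots> = proportional_coeff G x"
    using x finite_pairs E.weight_pos[of "fst x"] F.weight_pos[of "snd x"] by (auto simp: c_def)
  finally show ?thesis .
qed

lemma fdelta_optimal: "fdelta eb fb (optimal_tensor G) = laurent (sumset S T) G"
  unfolding fdelta_tensor
proof (rule laurent_cong)
  fix b assume b: "b \<in> sumset S T"
  have "(\<Sum>q\<in>S \<times> T. if fst q + snd q = b then tensor_coeff (optimal_tensor G) q else 0)
      = (\<Sum>q\<in>S \<times> T. if fst q + snd q = b then G b * complex_of_real (w (fst q) * v (snd q) / conv_weight S T w v b) else 0)"
    by (intro sum.cong refl) (auto simp: tensor_coeff_optimal proportional_coeff_def)
  also have "\<dots> = G b * complex_of_real (conv_weight S T w v b / conv_weight S T w v b)"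
    unfolding conv_weight_def sum_divide_distrib of_real_sum sum_distrib_left
    by (intro sum.cong refl) auto
  also have "\<dots> = G b" using conv_weight_pos[OF b] by simp
  finally show "(\<Sum>q\<in>S \<times> T. if fst q + snd q = b then tensor_coeff (optimal_tensor G) q else 0) = G b" .
qed

lemma optimal_tensor_norm:
  "(\<Sum>p\<in>eb \<times> fb. (cmod (optimal_tensor G p))\<^sup>2) = (\<Sum>b\<in>sumset S T. (cmod (G b))\<^sup>2 / conv_weight S T w v b)"
proof -
  let ?\<sigma> = "\<lambda>q::(int ^ 'n) \<times> (int ^ 'n). fst q + snd q" and ?W = "conv_weight S T w v"
  have "(\<Sum>p\<in>eb \<times> fb. (cmod (optimal_tensor G p))\<^sup>2)
      = (\<Sum>q\<in>S \<times> T. (cmod (proportional_coeff G q))\<^sup>2 / (w (fst q) * v (snd q)))"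
    using tensor_coeff_isometry[of "optimal_tensor G"]
    by (simp add: tensor_coeff_optimal cong: sum.cong)
  also have "\<dots> = (\<Sum>q\<in>S \<times> T. (cmod (G (?\<sigma> q)))\<^sup>2 * (w (fst q) * v (snd q)) / (?W (?\<sigma> q))\<^sup>2)"
  proof (intro sum.cong refl)
    fix q assume q: "q \<in> S \<times> T"
    have W: "?W (?\<sigma> q) > 0" using q by (intro conv_weight_pos) (auto simp: sumset_def)
    have wv: "w (fst q) * v (snd q) > 0" by (rule pair_weight_pos[OF q])
    have "cmod (proportional_coeff G q) = cmod (G (?\<sigma> q)) * (w (fst q) * v (snd q) / ?W (?\<sigma> q))"
      unfolding proportional_coeff_def norm_mult norm_of_real using W wv by simp
    then show "(cmod (proportional_coeff G q))\<^sup>2 / (w (fst q) * v (snd q))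
        = (cmod (G (?\<sigma> q)))\<^sup>2 * (w (fst q) * v (snd q)) / (?W (?\<sigma> q))\<^sup>2"
      using W wv by (simp add: power_mult_distrib power2_eq_square field_simps)
  qed
  also have "\<dots> = (\<Sum>b\<in>sumset S T. \<Sum>q\<in>S \<times> T.
      if ?\<sigma> q = b then (cmod (G b))\<^sup>2 * (w (fst q) * v (snd q)) / (?W b)\<^sup>2 else 0)"
    unfolding sumset_def by (subst sum_by_fibres[OF finite_pairs, where \<sigma> = ?\<sigma>]) (auto intro!: sum.cong)
  also have "\<dots> = (\<Sum>b\<in>sumset S T. (cmod (G b))\<^sup>2 * ?W b / (?W b)\<^sup>2)"
    unfolding conv_weight_def sum_distrib_left sum_divide_distrib by (intro sum.cong refl) auto
  also have "\<dots> = (\<Sum>b\<in>sumset S T. (cmod (G b))\<^sup>2 / ?W b)"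
    using conv_weight_pos by (intro sum.cong refl) (simp add: power2_eq_square)
  finally show ?thesis .
qed

lemma min_tensor_norm:
  "Inf {sqrt (\<Sum>p\<in>eb \<times> fb. (cmod (h p))\<^sup>2) | h. fdelta eb fb h = laurent (sumset S T) G}
    = sqrt (\<Sum>b\<in>sumset S T. (cmod (G b))\<^sup>2 / conv_weight S T w v b)"
proof (rule cInf_eq_minimum)
  show "sqrt (\<Sum>b\<in>sumset S T. (cmod (G b))\<^sup>2 / conv_weight S T w v b)
      \<in> {sqrt (\<Sum>p\<in>eb \<times> fb. (cmod (h p))\<^sup>2) | h. fdelta eb fb h = laurent (sumset S T) G}"
    using fdelta_optimal optimal_tensor_norm by (auto intro!: exI[of _ "optimal_tensor G"])
qed (auto intro: tensor_norm_lower_bound)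

end


section \<open>The product formula\<close>

definition same_space :: "'x fsp \<Rightarrow> 'x fsp \<Rightarrow> bool" where
  "same_space E R \<longleftrightarrow> fst E = fst R \<and> (\<forall>f\<in>fst E. \<forall>g\<in>fst E. snd E f g = snd R f g)"

locale weighted_laurent_pair = E: weighted_laurent S w + F: weighted_laurent T v
  for S :: "(int ^ 'n::finite) set" and w and T :: "(int ^ 'n) set" and v

sublocale weighted_laurent_pair \<subseteq> laurent_onb_pair S w E.chosen_onb T v F.chosen_onb
  by unfold_locales (rule E.chosen_onb_is_onb, rule F.chosen_onb_is_onb)

context weighted_laurent_pair
begin

lemma fprod_carrier:
  "fst (fprod (laurent_space S w) (laurent_space T v)) = fst (laurent_space (sumset S T) (conv_weight S T w v))"
  unfolding fprod_def Let_def fst_conv laurent_space_carrier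
proof (intro equalityI subsetI)
  fix g assume "g \<in> {fdelta E.chosen_onb F.chosen_onb h | h. True}"
  then show "g \<in> {laurent (sumset S T) c | c. True}" by (auto simp: fdelta_tensor)
next
  fix g assume "g \<in> {laurent (sumset S T) c | c. True}"
  then obtain G where "g = laurent (sumset S T) G" by auto
  then show "g \<in> {fdelta E.chosen_onb F.chosen_onb h | h. True}"
    by (auto simp: fdelta_optimal intro!: exI[of _ "optimal_tensor G"])
qed

lemma fprod_norm_laurent:
  "fprod_norm (laurent_space S w) (laurent_space T v) (laurent (sumset S T) G)
    = sqrt (\<Sum>b\<in>sumset S T. (cmod (G b))\<^sup>2 / conv_weight S T w v b)"
  unfolding fprod_norm_def Let_def by (rule min_tensor_norm)

text \<open>The product of the Laurent spaces on \<open>S\<close> and \<open>T\<close> is the Laurent space on \<open>S + T\<close> with the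
  convolved weights: the norms agree by \<open>fprod_norm_laurent\<close>, hence so do the inner products
  obtained from them by polarization.\<close>
theorem fprod_laurent_space:
  "same_space (fprod (laurent_space S w) (laurent_space T v)) (laurent_space (sumset S T) (conv_weight S T w v))"
proof -
  let ?R = "laurent_space (sumset S T) (conv_weight S T w v)" and ?P = "sumset S T"
  let ?N = "fprod_norm (laurent_space S w) (laurent_space T v)" and ?W = "conv_weight S T w v"
  have norm_sq: "complex_of_real ((?N (laurent ?P G))\<^sup>2)
      = (\<Sum>b\<in>?P. complex_of_real ((cmod (G b))\<^sup>2) / complex_of_real (?W b))" for G
  proof -
    have "(?N (laurent ?P G))\<^sup>2 = (\<Sum>b\<in>?P. (cmod (G b))\<^sup>2 / ?W b)"
      unfolding fprod_norm_laurent using conv_weight_pos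
      by (intro real_sqrt_pow2 sum_nonneg) (auto intro!: divide_nonneg_pos)
    then show ?thesis by simp
  qed
  have "snd (fprod (laurent_space S w) (laurent_space T v)) f g = snd ?R f g"
    if f: "f = laurent ?P F" and g: "g = laurent ?P G" for f g F G
  proof -
    have combinations:
      "(\<lambda>x. f x + g x) = laurent ?P (\<lambda>b. F b + G b)" "(\<lambda>x. f x - g x) = laurent ?P (\<lambda>b. F b - G b)"
      "(\<lambda>x. f x + \<i> * g x) = laurent ?P (\<lambda>b. F b + \<i> * G b)"
      "(\<lambda>x. f x - \<i> * g x) = laurent ?P (\<lambda>b. F b - \<i> * G b)"
      unfolding f g by (simp_all add: laurent_add laurent_diff laurent_smult)
    have "snd (fprod (laurent_space S w) (laurent_space T v)) f g =
      ((complex_of_real ((?N (\<lambda>x. f x + g x))\<^sup>2) - complex_of_real ((?N (\<lambda>x. f x - g x))\<^sup>2))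
        + \<i> * complex_of_real ((?N (\<lambda>x. f x + \<i> * g x))\<^sup>2)
        - \<i> * complex_of_real ((?N (\<lambda>x. f x - \<i> * g x))\<^sup>2)) / 4"
      unfolding fprod_def Let_def by simp
    also have "\<dots> = (\<Sum>b\<in>?P. ((complex_of_real ((cmod (F b + G b))\<^sup>2) - complex_of_real ((cmod (F b - G b))\<^sup>2)
        + \<i> * complex_of_real ((cmod (F b + \<i> * G b))\<^sup>2)
        - \<i> * complex_of_real ((cmod (F b - \<i> * G b))\<^sup>2)) / 4) / complex_of_real (?W b))"
      unfolding combinations norm_sq
      by (simp add: sum_subtractf sum.distrib sum_distrib_left sum_divide_distrib diff_divide_distrib
          add_divide_distrib algebra_simps)
    also have "\<dots> = (\<Sum>b\<in>?P. F b * cnj (G b) / complex_of_real (?W b))"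
      by (simp only: polarization)
    also have "\<dots> = snd ?R f g"
      unfolding laurent_space_inner f g using finite_sumset by (intro sum.cong refl) (simp add: lcoeff_laurent)
    finally show ?thesis .
  qed
  then show ?thesis
    unfolding same_space_def fprod_carrier by (auto simp: laurent_space_carrier)
qed

end

section \<open>Laurent spaces weighted by fibre counts\<close>

text \<open>\<open>fprod\<close> sees its factors only through their orthonormal bases, so it respects
  \<open>same_space\<close>.\<close>
lemma same_space_is_onb: "same_space E R \<Longrightarrow> is_onb E = is_onb R"
  unfolding same_space_def is_onb_def by (intro ext) (auto simp: subset_iff)

lemma fprod_same_space:
  "same_space E E' \<Longrightarrow> same_space F F' \<Longrightarrow> fprod E F = fprod E' F'"
  unfolding fprod_def fprod_norm_def by (simp add: same_space_is_onb)

definition fibre_count :: "'t set \<Rightarrow> ('t \<Rightarrow> int ^ 'n) \<Rightarrow> int ^ 'n \<Rightarrow> real" where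
  "fibre_count X \<sigma> b = (\<Sum>t\<in>X. if \<sigma> t = b then 1 else 0)"

text \<open>\<open>E\<close> is modelled by the finite index set \<open>X\<close> with exponent map \<open>\<sigma>\<close>: it is the Laurent
  space on \<open>\<sigma> ` X\<close> whose weight at \<open>b\<close> is the size of the fibre of \<open>\<sigma>\<close> over \<open>b\<close>.
  The theorem says that \<open>X\<close> = tuples and \<open>\<sigma>\<close> = their sum model the product space.\<close>
definition counting_model :: "(complex ^ 'n::finite) fsp \<Rightarrow> 't set \<Rightarrow> ('t \<Rightarrow> int ^ 'n) \<Rightarrow> bool" where
  "counting_model E X \<sigma> \<longleftrightarrow> finite X \<and> same_space E (laurent_space (\<sigma> ` X) (fibre_count X \<sigma>))"

lemma fibre_count_pos: "finite X \<Longrightarrow> b \<in> \<sigma> ` X \<Longrightarrow> fibre_count X \<sigma> b > 0"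
  unfolding fibre_count_def by (auto intro!: sum_pos2)

lemma fibre_count_card: "finite X \<Longrightarrow> fibre_count X \<sigma> b = real (card {t \<in> X. \<sigma> t = b})"
  unfolding fibre_count_def by (simp flip: sum.inter_filter)

lemma counting_model_base:
  assumes "finite A"
  shows "counting_model (laurent_space A (\<lambda>_. 1)) A id"
proof -
  have "laurent_space A (fibre_count A id) = laurent_space A (\<lambda>_. 1)"
    using assms by (intro laurent_space_weights_cong) (simp add: fibre_count_def)
  then show ?thesis using assms by (simp add: counting_model_def same_space_def)
qed

lemma counting_model_relabel:
  assumes model: "counting_model E X \<sigma>" and bij: "bij_betw \<phi> X Y"
    and compat: "\<And>t. t \<in> X \<Longrightarrow> \<tau> (\<phi> t) = \<sigma> t"
  shows "counting_model E Y \<tau>"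
proof -
  have "\<tau> ` Y = \<sigma> ` X"
    using bij compat unfolding bij_betw_def by (auto simp: image_comp[symmetric]) (metis image_eqI)
  moreover have "fibre_count Y \<tau> = fibre_count X \<sigma>"
    unfolding fibre_count_def using compat
    by (intro ext, subst sum.reindex_bij_betw[OF bij, symmetric]) (auto intro!: sum.cong)
  ultimately show ?thesis using model bij by (simp add: counting_model_def bij_betw_finite)
qed

lemma conv_weight_fibre_count:
  fixes \<sigma>1 :: "'s \<Rightarrow> int ^ 'n::finite" and \<sigma>2 :: "'t \<Rightarrow> int ^ 'n"
  assumes f1: "finite X1" and f2: "finite X2"
  shows "conv_weight (\<sigma>1 ` X1) (\<sigma>2 ` X2) (fibre_count X1 \<sigma>1) (fibre_count X2 \<sigma>2) b
    = fibre_count (X1 \<times> X2) (\<lambda>p. \<sigma>1 (fst p) + \<sigma>2 (snd p)) b"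
proof -
  let ?S1 = "\<sigma>1 ` X1" and ?S2 = "\<sigma>2 ` X2"
  have "conv_weight ?S1 ?S2 (fibre_count X1 \<sigma>1) (fibre_count X2 \<sigma>2) b
      = (\<Sum>q\<in>?S1 \<times> ?S2. \<Sum>t1\<in>X1. \<Sum>t2\<in>X2.
          if fst q + snd q = b \<and> \<sigma>1 t1 = fst q \<and> \<sigma>2 t2 = snd q then 1 else 0)"
    unfolding conv_weight_def fibre_count_def
    by (intro sum.cong refl) (auto simp: sum_product sum.If_cases[symmetric] intro!: sum.cong)
  also have "\<dots> = (\<Sum>t1\<in>X1. \<Sum>t2\<in>X2. \<Sum>q\<in>?S1 \<times> ?S2.
      if fst q + snd q = b \<and> \<sigma>1 t1 = fst q \<and> \<sigma>2 t2 = snd q then 1 else 0)"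
    by (subst sum.swap) (intro sum.cong refl sum.swap)
  also have "\<dots> = (\<Sum>t1\<in>X1. \<Sum>t2\<in>X2. if \<sigma>1 t1 + \<sigma>2 t2 = b then 1 else 0)"
  proof (intro sum.cong refl)
    fix t1 t2 assume t: "t1 \<in> X1" "t2 \<in> X2"
    have "(\<Sum>q\<in>?S1 \<times> ?S2. if fst q + snd q = b \<and> \<sigma>1 t1 = fst q \<and> \<sigma>2 t2 = snd q then 1 else 0)
        = (\<Sum>q\<in>?S1 \<times> ?S2. if q = (\<sigma>1 t1, \<sigma>2 t2) then (if \<sigma>1 t1 + \<sigma>2 t2 = b then 1 else 0) else (0::real))"
      by (intro sum.cong refl) auto
    then show "(\<Sum>q\<in>?S1 \<times> ?S2. if fst q + snd q = b \<and> \<sigma>1 t1 = fst q \<and> \<sigma>2 t2 = snd q then 1 else (0::real))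
        = (if \<sigma>1 t1 + \<sigma>2 t2 = b then 1 else 0)"
      using t f1 f2 by (simp add: sum.delta')
  qed
  also have "\<dots> = fibre_count (X1 \<times> X2) (\<lambda>p. \<sigma>1 (fst p) + \<sigma>2 (snd p)) b"
    unfolding fibre_count_def by (subst sum.cartesian_product) (simp add: case_prod_beta)
  finally show ?thesis .
qed

lemma counting_model_fprod:
  assumes model1: "counting_model E X1 \<sigma>1" and model2: "counting_model F X2 \<sigma>2"
  shows "counting_model (fprod E F) (X1 \<times> X2) (\<lambda>p. \<sigma>1 (fst p) + \<sigma>2 (snd p))"
proof -
  let ?\<sigma> = "\<lambda>p. \<sigma>1 (fst p) + \<sigma>2 (snd p)"
  have f1: "finite X1" and f2: "finite X2" using model1 model2 by (auto simp: counting_model_def)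
  interpret weighted_laurent_pair "\<sigma>1 ` X1" "fibre_count X1 \<sigma>1" "\<sigma>2 ` X2" "fibre_count X2 \<sigma>2"
    using f1 f2 by unfold_locales (auto intro: fibre_count_pos)
  have "fprod E F = fprod (laurent_space (\<sigma>1 ` X1) (fibre_count X1 \<sigma>1)) (laurent_space (\<sigma>2 ` X2) (fibre_count X2 \<sigma>2))"
    using model1 model2 by (intro fprod_same_space) (auto simp: counting_model_def)
  moreover have "sumset (\<sigma>1 ` X1) (\<sigma>2 ` X2) = ?\<sigma> ` (X1 \<times> X2)"
    unfolding sumset_def by (auto simp: image_iff) (metis fst_conv snd_conv)+
  moreover have "conv_weight (\<sigma>1 ` X1) (\<sigma>2 ` X2) (fibre_count X1 \<sigma>1) (fibre_count X2 \<sigma>2)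
      = fibre_count (X1 \<times> X2) ?\<sigma>"
    using conv_weight_fibre_count[OF f1 f2] by (rule ext)
  ultimately show ?thesis
    using fprod_laurent_space f1 f2 by (simp add: counting_model_def)
qed

section \<open>Tuples of exponents\<close>

text \<open>Exponent tuples using only the slots \<open>i, 0..k-1\<close>; they model the power \<open>\<F>\<^sub>i\<^sup>k\<close>.\<close>
definition single_index :: "'n \<Rightarrow> nat \<Rightarrow> 'n \<Rightarrow> nat" where
  "single_index i k = (\<lambda>i'. if i' = i then k else 0)"

lemma mem_tuples:
  "t \<in> tuples A L \<longleftrightarrow> (\<forall>i. \<forall>j<L i. t i j \<in> A i) \<and> (\<forall>i j. L i \<le> j \<longrightarrow> t i j = 0)"
  by (simp add: tuples_def)

lemma tsum_single_index: "tsum (single_index i k) t = (\<Sum>j<k. t i j)"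
proof -
  have "tsum (single_index i k) t = (\<Sum>i'\<in>UNIV. if i' = i then (\<Sum>j<k. t i j) else 0)"
    unfolding tsum_def by (intro sum.cong refl) (simp add: single_index_def)
  then show ?thesis by simp
qed

lemma tuples_single_bij:
  "bij_betw (\<lambda>a i' j. if i' = i \<and> j = 0 then a else 0) (A i) (tuples A (single_index i 1))"
proof (rule bij_betw_byWitness[where f'="\<lambda>t. t i 0"])
  show "\<forall>t\<in>tuples A (single_index i 1). (\<lambda>i' j. if i' = i \<and> j = 0 then t i 0 else 0) = t"
    by (auto simp: mem_tuples single_index_def intro!: ext)
qed (auto simp: mem_tuples single_index_def)

lemma tuples_snoc_bij:
  "bij_betw (\<lambda>p. (fst p)(i := (fst p i)(k := snd p)))
     (tuples A (single_index i k) \<times> A i) (tuples A (single_index i (Suc k)))"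
proof (rule bij_betw_byWitness[where f'="\<lambda>t. (t(i := (t i)(k := 0)), t i k)"])
  show "\<forall>p\<in>tuples A (single_index i k) \<times> A i.
      (((fst p)(i := (fst p i)(k := snd p)))(i := (((fst p)(i := (fst p i)(k := snd p))) i)(k := 0)),
        ((fst p)(i := (fst p i)(k := snd p))) i k) = p"
  proof
    fix p assume p: "p \<in> tuples A (single_index i k) \<times> A i"
    then have "fst p i k = 0" by (auto simp: mem_tuples single_index_def)
    then have "(fst p)(i := (fst p i)(k := 0)) = fst p" by (intro ext) auto
    then show "(((fst p)(i := (fst p i)(k := snd p)))(i := (((fst p)(i := (fst p i)(k := snd p))) i)(k := 0)),
        ((fst p)(i := (fst p i)(k := snd p))) i k) = p"
      by (simp add: prod_eq_iff)
  qed
  show "(\<lambda>p. (fst p)(i := (fst p i)(k := snd p))) ` (tuples A (single_index i k) \<times> A i)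
      \<subseteq> tuples A (single_index i (Suc k))"
    by (auto simp: mem_tuples single_index_def less_Suc_eq)
  show "(\<lambda>t. (t(i := (t i)(k := 0)), t i k)) ` tuples A (single_index i (Suc k))
      \<subseteq> tuples A (single_index i k) \<times> A i"
    by (auto simp: mem_tuples single_index_def)
qed auto

lemma tuples_join_bij:
  assumes Ly: "L y = 0"
  shows "bij_betw (\<lambda>p i j. fst p i j + snd p i j)
    (tuples A L \<times> tuples A (single_index y k)) (tuples A (L(y := k)))"
proof -
  have split: "fst p y j = 0" "i \<noteq> y \<Longrightarrow> snd p i j = 0"
    if "p \<in> tuples A L \<times> tuples A (single_index y k)" for p i j
    using that Ly by (auto simp: mem_tuples single_index_def)
  show ?thesis
    by (rule bij_betw_byWitness[where f'="\<lambda>t. (\<lambda>i j. if i = y then 0 else t i j, \<lambda>i j. if i = y then t i j else 0)"])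
      (use split Ly in \<open>auto simp: mem_tuples single_index_def prod_eq_iff intro!: ext\<close>)
qed

lemma tsum_join:
  assumes Ly: "L y = 0" and p: "p \<in> tuples A L \<times> tuples A (single_index y k)"
  shows "tsum (L(y := k)) (\<lambda>i j. fst p i j + snd p i j) = tsum L (fst p) + tsum (single_index y k) (snd p)"
proof -
  have z1: "fst p y j = 0" and z2: "i \<noteq> y \<Longrightarrow> snd p i j = 0" for i j
    using p Ly by (auto simp: mem_tuples single_index_def)
  have "(\<Sum>j<(L(y := k)) i. fst p i j) = (\<Sum>j<L i. fst p i j)" for i
    using z1 Ly by (cases "i = y") auto
  moreover have "(\<Sum>j<(L(y := k)) i. snd p i j) = (\<Sum>j<single_index y k i. snd p i j)" for i
    using z2 by (cases "i = y") (auto simp: single_index_def)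
  ultimately show ?thesis by (simp add: tsum_def sum.distrib)
qed


lemma counting_model_fpow:
  assumes fin: "finite (A i)"
  shows "counting_model (fpow (laurent_space (A i) (\<lambda>_. 1)) (Suc m))
    (tuples A (single_index i (Suc m))) (tsum (single_index i (Suc m)))"
proof (induction m)
  case 0
  have "counting_model (laurent_space (A i) (\<lambda>_. 1)) (tuples A (single_index i 1)) (tsum (single_index i 1))"
    by (rule counting_model_relabel[OF counting_model_base[OF fin] tuples_single_bij[of i A]])
      (simp add: tsum_single_index)
  then show ?case by simp
next
  case (Suc m)
  show ?case
    using counting_model_relabel[OF counting_model_fprod[OF Suc.IH counting_model_base[OF fin]]
        tuples_snoc_bij[where A = A and i = i and k = "Suc m"]]
    by (simp add: tsum_single_index)
qed

lemma counting_model_join: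
  assumes E: "counting_model E (tuples A L) (tsum L)"
    and F: "counting_model F (tuples A (single_index y k)) (tsum (single_index y k))"
    and Ly: "L y = 0"
  shows "counting_model (fprod E F) (tuples A (L(y := k))) (tsum (L(y := k)))"
  by (rule counting_model_relabel[OF counting_model_fprod[OF E F] tuples_join_bij[of L y A k, OF Ly]])
    (simp add: tsum_join[where L = L and y = y and k = k, OF Ly])

lemma counting_model_fprod_list:
  fixes A :: "'n::finite \<Rightarrow> (int ^ 'n) set" and lam :: "'n \<Rightarrow> nat"
  assumes fin: "\<And>i. finite (A i)" and pos: "\<And>i. lam i > 0"
  shows "distinct ys \<Longrightarrow> counting_model E (tuples A L) (tsum L) \<Longrightarrow> (\<forall>y\<in>set ys. L y = 0) \<Longrightarrow>
    counting_model (fprod_list (E # map (\<lambda>i. fpow (laurent_space (A i) (\<lambda>_. 1)) (lam i)) ys))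
      (tuples A (\<lambda>i. if i \<in> set ys then lam i else L i)) (tsum (\<lambda>i. if i \<in> set ys then lam i else L i))"
proof (induction ys arbitrary: E L)
  case Nil
  then show ?case by simp
next
  case (Cons y ys)
  let ?P = "\<lambda>i. fpow (laurent_space (A i) (\<lambda>_. 1)) (lam i)"
  obtain m where m: "lam y = Suc m" using pos[of y] by (cases "lam y") auto
  have "counting_model (fprod E (?P y)) (tuples A (L(y := lam y))) (tsum (L(y := lam y)))"
    using counting_model_join[OF Cons.prems(2) counting_model_fpow[OF fin]] Cons.prems(3) m by simp
  then have "counting_model (fprod_list (fprod E (?P y) # map ?P ys))
      (tuples A (\<lambda>i. if i \<in> set ys then lam i else (L(y := lam y)) i))
      (tsum (\<lambda>i. if i \<in> set ys then lam i else (L(y := lam y)) i))"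
    by (rule Cons.IH[rotated]) (use Cons.prems in auto)
  moreover have "(\<lambda>i. if i \<in> set ys then lam i else (L(y := lam y)) i)
      = (\<lambda>i. if i \<in> set (y # ys) then lam i else L i)"
    by (intro ext) auto
  ultimately show ?case by simp
qed

theorem mainTheorem8:
  fixes A :: "'n::finite \<Rightarrow> (int ^ 'n) set"
    and lam :: "'n \<Rightarrow> nat"
    and xs :: "'n list"
  assumes fin: "\<And>i. finite (A i)"
    and pos: "\<And>i. lam i > 0"
    and xs: "distinct xs" "set xs = UNIV"
  defines "G \<equiv> fprod_list (map (\<lambda>i. fpow (laurent_space (A i) (\<lambda>_. 1)) (lam i)) xs)"
    and "B \<equiv> minksum A lam"
  shows "fst G = fst (laurent_space B (\<lambda>b. real (tcount A lam b)))
    \<and> (\<forall>f\<in>fst G. \<forall>g\<in>fst G.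
          snd G f g = snd (laurent_space B (\<lambda>b. real (tcount A lam b))) f g)"
proof -
  obtain x ys where xs_cons: "xs = x # ys" using xs(2) by (cases xs) auto
  obtain m where m: "lam x = Suc m" using pos[of x] by (cases "lam x") auto
  have "counting_model (fprod_list (fpow (laurent_space (A x) (\<lambda>_. 1)) (lam x)
      # map (\<lambda>i. fpow (laurent_space (A i) (\<lambda>_. 1)) (lam i)) ys))
      (tuples A (\<lambda>i. if i \<in> set ys then lam i else single_index x (lam x) i))
      (tsum (\<lambda>i. if i \<in> set ys then lam i else single_index x (lam x) i))"
    using counting_model_fpow[where i = x and m = m, OF fin] xs xs_cons m
    by (intro counting_model_fprod_list[OF fin pos]) (auto simp: single_index_def)
  moreover have "(\<lambda>i. if i \<in> set ys then lam i else single_index x (lam x) i) = lam"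
  proof
    fix i
    have "i \<in> set (x # ys)" using xs(2) xs_cons by simp
    then show "(if i \<in> set ys then lam i else single_index x (lam x) i) = lam i"
      by (auto simp: single_index_def)
  qed
  ultimately have model: "counting_model G (tuples A lam) (tsum lam)"
    by (simp add: G_def xs_cons)
  then have "fibre_count (tuples A lam) (tsum lam) = (\<lambda>b. real (tcount A lam b))"
    by (auto simp: counting_model_def fibre_count_card tcount_def)
  then show ?thesis
    using model by (simp add: counting_model_def same_space_def B_def minksum_def)
qed

end
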